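(* Let $X_1,X_2,\dots$ be i.i.d. real random variables with $A\le X_1\le B$ almost surely for constants $A<B$, let $\mu:=\mathbb E[X_1]$ and $\bar X_k:=\frac1k\sum_{i=1}^kX_i$. Then for every $n\in\mathbb N$ and every $x>0$, $$\mathbb P\Big(\sup_{k\ge n}|\bar X_k-\mu|>x\Big)\le 2\exp\{-2(B-A)^{-2}\,n\,x^2\}.$$ *)

theory Defs
  imports "HOL-Probability.Probability"
begin

end

theory Submission
  imports Defs
begin

(* The sample means form a reverse martingale. By exchangeability, each leave-one-out mean of
   X_1, ..., X_k behaves like the mean of k - 1 variables, and these k means average to the mean
   of all k; so by Jensen's inequality exp (l (mean_k - mu)) is a reverse submartingale: on every
   event symmetric in the first k coordinates its integral is at most that of
   exp (l (mean_(k-1) - mu)). Splitting the event max_{n<=k<=N} (mean_k - mu) > x according to the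
   last exceedance time k, which is symmetric in the first k coordinates, yields Doob's maximal
   inequality exp (l x) P(...) <= E exp (l (mean_n - mu)). Hoeffding's lemma bounds the right-hand
   side by exp (l^2 (B - A)^2 / (8 n)), and l = 4 n x / (B - A)^2 gives exp (-2 n x^2 / (B - A)^2).
   The same bound for -X_i and the limit N -> infinity give the theorem. *)

definition sample_mean :: "nat \<Rightarrow> (nat \<Rightarrow> real) \<Rightarrow> real" where
  "sample_mean k f = (\<Sum>i=1..k. f i) / real k"

lemma sample_mean_uminus: "sample_mean k (\<lambda>i. - f i) = - sample_mean k f"
  by (simp add: sample_mean_def sum_negf)

lemma borel_measurable_sample_mean:
  fixes X :: "nat \<Rightarrow> 'a \<Rightarrow> real"
  assumes "\<And>i. i \<in> {1..k} \<Longrightarrow> X i \<in> borel_measurable M"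
  shows "(\<lambda>\<omega>. sample_mean k (\<lambda>i. X i \<omega>)) \<in> borel_measurable M"
  unfolding sample_mean_def using assms by (intro borel_measurable_divide borel_measurable_sum) auto

lemma exp_sample_mean_le_leave_one_out:
  fixes f :: "nat \<Rightarrow> real"
  assumes k: "2 \<le> k" and l: "0 \<le> l"
  shows "exp (l * (sample_mean k f - \<mu>)) \<le>
         (\<Sum>j=1..k. exp (l * (((\<Sum>i=1..k. f i) - f j) / real (k - 1) - \<mu>))) / real k"
proof -
  define y where "y j = ((\<Sum>i=1..k. f i) - f j) / real (k - 1) - \<mu>" for j
  have "(\<Sum>j=1..k. y j) = (\<Sum>j=1..k. ((\<Sum>i=1..k. f i) - f j) / real (k - 1)) - real k * \<mu>"
    by (simp add: y_def sum_subtractf)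
  also have "(\<Sum>j=1..k. ((\<Sum>i=1..k. f i) - f j) / real (k - 1))
           = (\<Sum>j=1..k. (\<Sum>i=1..k. f i) - f j) / real (k - 1)"
    by (rule sum_divide_distrib[symmetric])
  also have "(\<Sum>j=1..k. (\<Sum>i=1..k. f i) - f j) = (real k - 1) * (\<Sum>i=1..k. f i)"
    by (simp add: sum_subtractf algebra_simps)
  also have "(real k - 1) * (\<Sum>i=1..k. f i) / real (k - 1) = (\<Sum>i=1..k. f i)"
    using k by simp
  finally have "(\<Sum>j=1..k. (1 / real k) *\<^sub>R y j) = sample_mean k f - \<mu>"
    using k by (simp add: sample_mean_def field_simps flip: sum_divide_distrib)
  moreover have "exp (l * (\<Sum>j=1..k. (1 / real k) *\<^sub>R y j)) \<le> (\<Sum>j=1..k. (1 / real k) * exp (l * y j))"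
    by (rule convex_on_sum[OF _ _ convex_on_exp[OF l]]) (use k in auto)
  ultimately show ?thesis
    by (simp add: y_def sum_divide_distrib)
qed

lemma sets_Collect_finite_exceeds:
  fixes S :: "'i \<Rightarrow> 'a \<Rightarrow> real"
  assumes "finite K" "\<And>k. k \<in> K \<Longrightarrow> S k \<in> borel_measurable M"
  shows "{\<omega> \<in> space M. \<exists>k\<in>K. x < S k \<omega>} \<in> sets M"
proof (intro sets.sets_Collect_finite_Ex assms(1))
  fix k assume "k \<in> K"
  then have "S k \<in> borel_measurable M" by (rule assms(2))
  then show "{\<omega> \<in> space M. x < S k \<omega>} \<in> sets M"
    by (rule borel_measurable_iff_greater[THEN iffD1, rule_format])
qed

definition last_exceedance :: "'a measure \<Rightarrow> (nat \<Rightarrow> 'a \<Rightarrow> real) \<Rightarrow> real \<Rightarrow> nat \<Rightarrow> nat \<Rightarrow> 'a set" where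
  "last_exceedance M S x N k = {\<omega> \<in> space M. x < S k \<omega> \<and> (\<forall>j\<in>{k<..N}. S j \<omega> \<le> x)}"

lemma sets_last_exceedance:
  assumes "\<And>j. j \<le> N \<Longrightarrow> S j \<in> borel_measurable M" and "k \<le> N"
  shows "last_exceedance M S x N k \<in> sets M"
proof -
  have "{\<omega> \<in> space M. j \<in> {k<..N} \<longrightarrow> S j \<omega> \<le> x} \<in> sets M" for j
  proof (cases "j \<in> {k<..N}")
    case True
    then have "S j \<in> borel_measurable M" using assms(1) by simp
    then show ?thesis using True by simp
  next
    case False
    then have "{\<omega> \<in> space M. j \<in> {k<..N} \<longrightarrow> S j \<omega> \<le> x} = space M" by blast
    then show ?thesis by simp
  qed
  then have "{\<omega> \<in> space M. \<forall>j. j \<in> {k<..N} \<longrightarrow> S j \<omega> \<le> x} \<in> sets M"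
    by (rule sets.sets_Collect_countable_All)
  moreover have "{\<omega> \<in> space M. x < S k \<omega>} \<in> sets M"
    using assms by simp
  ultimately show ?thesis
    unfolding last_exceedance_def Ball_def by (rule sets.sets_Collect_conj)
qed

lemma disjoint_family_last_exceedance: "disjoint_family_on (last_exceedance M S x N) {..N}"
  unfolding disjoint_family_on_def
proof (intro ballI impI)
  have "\<omega> \<notin> last_exceedance M S x N j" if "\<omega> \<in> last_exceedance M S x N k" "j < k" "k \<le> N" for \<omega> j k
    using that by (auto simp: last_exceedance_def intro!: bexI[of _ k])
  then show "last_exceedance M S x N j \<inter> last_exceedance M S x N k = {}"
    if "j \<in> {..N}" "k \<in> {..N}" "j \<noteq> k" for j k
    using that by (metis atMost_iff disjoint_iff linorder_neqE_nat)
qed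

lemma exceedance_imp_last_exceedance:
  assumes "\<omega> \<in> space M" "k \<le> N" "x < S k \<omega>"
  shows "\<exists>j\<in>{k..N}. \<omega> \<in> last_exceedance M S x N j"
proof -
  define K where "K = {j \<in> {k..N}. x < S j \<omega>}"
  have "finite K" "k \<in> K" using assms by (auto simp: K_def)
  then have "Max K \<in> K" by (intro Max_in) auto
  moreover have "S j \<omega> \<le> x" if "j \<in> {Max K<..N}" for j
  proof (rule ccontr)
    assume "\<not> S j \<omega> \<le> x"
    with that \<open>Max K \<in> K\<close> have "j \<in> K" by (auto simp: K_def)
    with \<open>finite K\<close> have "j \<le> Max K" by simp
    with that show False by simp
  qed
  ultimately show ?thesis using assms(1) by (auto simp: K_def last_exceedance_def)
qed

(* Doob's maximal inequality; Z_last is the submartingale property on the events where k is the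
   last exceedance time. *)
lemma maximal_ineq_last_exceedance:
  fixes S :: "nat \<Rightarrow> 'a \<Rightarrow> real" and Z :: "nat \<Rightarrow> 'a \<Rightarrow> ennreal"
  assumes S: "\<And>k. k \<le> N \<Longrightarrow> S k \<in> borel_measurable M"
    and Z: "\<And>k. k \<le> N \<Longrightarrow> Z k \<in> borel_measurable M"
    and Z_ge: "\<And>k \<omega>. k \<in> {n..N} \<Longrightarrow> x < S k \<omega> \<Longrightarrow> c \<le> Z k \<omega>"
    and Z_last: "\<And>k. k \<in> {n..N} \<Longrightarrow>
      (\<integral>\<^sup>+\<omega>. Z k \<omega> * indicator (last_exceedance M S x N k) \<omega> \<partial>M)
        \<le> (\<integral>\<^sup>+\<omega>. Z n \<omega> * indicator (last_exceedance M S x N k) \<omega> \<partial>M)"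
  shows "c * emeasure M {\<omega> \<in> space M. \<exists>k\<in>{n..N}. x < S k \<omega>} \<le> (\<integral>\<^sup>+\<omega>. Z n \<omega> \<partial>M)"
proof -
  let ?E = "{\<omega> \<in> space M. \<exists>k\<in>{n..N}. x < S k \<omega>}"
  let ?L = "last_exceedance M S x N"
  have L: "indicator (?L k) \<in> borel_measurable M" if "k \<le> N" for k
    using sets_last_exceedance[OF S that] by simp
  have disj: "disjoint_family_on ?L {n..N}"
    by (rule disjoint_family_on_mono[OF _ disjoint_family_last_exceedance]) auto
  have "?E \<in> sets M"
    using S by (intro sets_Collect_finite_exceeds) auto
  then have "c * emeasure M ?E = (\<integral>\<^sup>+\<omega>. c * indicator ?E \<omega> \<partial>M)"
    by (rule nn_integral_cmult_indicator[symmetric])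
  also have "\<dots> \<le> (\<integral>\<^sup>+\<omega>. (\<Sum>k\<in>{n..N}. Z k \<omega> * indicator (?L k) \<omega>) \<partial>M)"
  proof (rule nn_integral_mono)
    fix \<omega> assume \<omega>: "\<omega> \<in> space M"
    show "c * indicator ?E \<omega> \<le> (\<Sum>k\<in>{n..N}. Z k \<omega> * indicator (?L k) \<omega>)"
    proof (cases "\<omega> \<in> ?E")
      case True
      then obtain k where "k \<in> {n..N}" "x < S k \<omega>" by blast
      moreover obtain j where "j \<in> {k..N}" "\<omega> \<in> ?L j"
        using exceedance_imp_last_exceedance[OF \<omega>, of k N x S] calculation by auto
      ultimately have j: "j \<in> {n..N}" "\<omega> \<in> ?L j" by auto
      then have "c \<le> Z j \<omega>"
        by (intro Z_ge) (auto simp: last_exceedance_def)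
      also have "Z j \<omega> = (\<Sum>k\<in>{n..N}. Z k \<omega> * indicator (?L k) \<omega>)"
        using j by (intro sum_indicator_disjoint_family[OF disj, symmetric]) auto
      finally show ?thesis
        using True by simp
    qed simp
  qed
  also have "\<dots> = (\<Sum>k\<in>{n..N}. \<integral>\<^sup>+\<omega>. Z k \<omega> * indicator (?L k) \<omega> \<partial>M)"
    by (intro nn_integral_sum borel_measurable_times_ennreal Z L) auto
  also have "\<dots> \<le> (\<Sum>k\<in>{n..N}. \<integral>\<^sup>+\<omega>. Z n \<omega> * indicator (?L k) \<omega> \<partial>M)"
    by (intro sum_mono Z_last)
  also have "\<dots> = (\<integral>\<^sup>+\<omega>. (\<Sum>k\<in>{n..N}. Z n \<omega> * indicator (?L k) \<omega>) \<partial>M)"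
    by (intro nn_integral_sum[symmetric] borel_measurable_times_ennreal Z L) auto
  also have "\<dots> = (\<integral>\<^sup>+\<omega>. Z n \<omega> * indicator (\<Union>k\<in>{n..N}. ?L k) \<omega> \<partial>M)"
    by (simp add: indicator_UN_disjoint[OF _ disj] sum_distrib_left)
  also have "\<dots> \<le> (\<integral>\<^sup>+\<omega>. Z n \<omega> \<partial>M)"
    by (intro nn_integral_mono) (simp add: indicator_def)
  finally show ?thesis .
qed

definition swap_coords :: "nat \<Rightarrow> nat \<Rightarrow> nat \<Rightarrow> (nat \<Rightarrow> real) \<Rightarrow> nat \<Rightarrow> real" where
  "swap_coords N a b f = (\<lambda>i\<in>{1..N}. f (Transposition.transpose a b i))"

lemma sum_swap_coords:
  assumes "a \<in> {1..k}" "b \<in> {1..k}" "k \<le> N"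
  shows "(\<Sum>i=1..k. swap_coords N a b f i) = (\<Sum>i=1..k. f i)"
proof -
  have "(\<Sum>i=1..k. swap_coords N a b f i) = (\<Sum>i=1..k. f (Transposition.transpose a b i))"
    using assms by (intro sum.cong) (auto simp: swap_coords_def)
  also have "\<dots> = (\<Sum>i=1..k. f i)"
    using sum.permute[OF permutes_swap_id[OF assms(1,2)], of f] by (simp add: comp_def)
  finally show ?thesis .
qed

lemma sample_mean_swap_coords:
  assumes "a \<in> {1..k}" "b \<in> {1..k}" "k \<le> j" "j \<le> N"
  shows "sample_mean j (swap_coords N a b f) = sample_mean j f"
  using assms sum_swap_coords[of a j b N f] by (simp add: sample_mean_def)

lemma sample_mean_pred_swap_coords:
  assumes "j \<in> {1..k}" "k \<le> N"
  shows "sample_mean (k - 1) (swap_coords N j k f) = ((\<Sum>i=1..k. f i) - f j) / real (k - 1)"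
proof -
  have k: "k = Suc (k - 1)" using assms by simp
  have "(\<Sum>i=1..k. f i) = (\<Sum>i=1..k. swap_coords N j k f i)"
    using assms sum_swap_coords[of j k k N f] by simp
  also have "\<dots> = (\<Sum>i=1..k-1. swap_coords N j k f i) + swap_coords N j k f k"
    by (subst k, subst sum.cl_ivl_Suc) (use assms in auto)
  also have "swap_coords N j k f k = f j"
    using assms by (simp add: swap_coords_def)
  finally show ?thesis by (simp add: sample_mean_def)
qed

(* Exchangeability is used on the canonical product space of the sample, where it is the
   invariance of the product measure under swapping two coordinates. *)
locale product_sample =
  fixes D :: "real measure" and N :: nat
  assumes prob_space_D: "prob_space D" and sets_D: "sets D = sets borel"
begin

abbreviation "Q \<equiv> PiM {1..N} (\<lambda>_. D)"

lemma measurable_coord: "i \<in> {1..N} \<Longrightarrow> (\<lambda>f. f i) \<in> borel_measurable Q"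
  using measurable_component_singleton[of i "{1..N}" "\<lambda>_. D"]
  by (simp add: measurable_cong_sets[OF refl sets_D])

lemma measurable_sum_coords: "k \<le> N \<Longrightarrow> (\<lambda>f. \<Sum>i=1..k. f i) \<in> borel_measurable Q"
  by (intro borel_measurable_sum measurable_coord) auto

lemma measurable_sample_mean: "k \<le> N \<Longrightarrow> sample_mean k \<in> borel_measurable Q"
  using borel_measurable_sample_mean[of k "\<lambda>i f. f i" Q] measurable_coord by simp

lemma measurable_swap_coords:
  assumes "a \<in> {1..N}" "b \<in> {1..N}"
  shows "swap_coords N a b \<in> measurable Q Q"
  unfolding swap_coords_def
proof (rule measurable_restrict)
  fix i assume "i \<in> {1..N}"
  then have "Transposition.transpose a b i \<in> {1..N}"
    using permutes_in_image[OF permutes_swap_id[OF assms]] by simp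
  then show "(\<lambda>f. f (Transposition.transpose a b i)) \<in> measurable Q D"
    by (rule measurable_component_singleton)
qed

lemma distr_swap_coords:
  assumes "a \<in> {1..N}" "b \<in> {1..N}"
  shows "distr Q Q (swap_coords N a b) = Q"
proof -
  have p: "Transposition.transpose a b permutes {1..N}"
    using assms by (rule permutes_swap_id)
  have "distr Q Q (\<lambda>f. \<lambda>i\<in>{1..N}. f (Transposition.transpose a b i)) = Q"
    using distr_PiM_reindex[of "{1..N}" "\<lambda>_. D", OF prob_space_D permutes_inj_on[OF p]]
      permutes_in_image[OF p] by auto
  then show ?thesis by (simp add: swap_coords_def[abs_def])
qed

lemma nn_integral_swap_coords:
  assumes "a \<in> {1..N}" "b \<in> {1..N}" "h \<in> borel_measurable Q"
  shows "(\<integral>\<^sup>+f. h (swap_coords N a b f) \<partial>Q) = (\<integral>\<^sup>+f. h f \<partial>Q)"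
proof -
  have "(\<integral>\<^sup>+f. h f \<partial>Q) = (\<integral>\<^sup>+f. h f \<partial>distr Q Q (swap_coords N a b))"
    by (simp only: distr_swap_coords[OF assms(1,2)])
  also have "\<dots> = (\<integral>\<^sup>+f. h (swap_coords N a b f) \<partial>Q)"
    by (rule nn_integral_distr[OF measurable_swap_coords[OF assms(1,2)]])
      (simp only: distr_swap_coords[OF assms(1,2)] assms(3))
  finally show ?thesis ..
qed

lemma nn_integral_leave_one_out:
  assumes k: "1 \<le> k" "k \<le> N" and j: "j \<in> {1..k}" and E: "E \<in> sets Q"
    and sym: "\<And>a b f. a \<in> {1..k} \<Longrightarrow> b \<in> {1..k} \<Longrightarrow> f \<in> space Q \<Longrightarrow>
      swap_coords N a b f \<in> E \<longleftrightarrow> f \<in> E"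
  shows "(\<integral>\<^sup>+f. ennreal (exp (l * (((\<Sum>i=1..k. f i) - f j) / real (k - 1) - \<mu>))) * indicator E f \<partial>Q)
       = (\<integral>\<^sup>+f. ennreal (exp (l * (sample_mean (k - 1) f - \<mu>))) * indicator E f \<partial>Q)"
    (is "_ = (\<integral>\<^sup>+f. ?Z f \<partial>Q)")
proof -
  have [measurable]: "sample_mean (k - 1) \<in> borel_measurable Q"
    using k by (intro measurable_sample_mean) simp
  note E[measurable]
  have jk: "j \<in> {1..N}" "k \<in> {1..N}" using j k by auto
  have "(\<integral>\<^sup>+f. ?Z f \<partial>Q) = (\<integral>\<^sup>+f. ?Z (swap_coords N j k f) \<partial>Q)"
    by (rule nn_integral_swap_coords[OF jk, symmetric]) measurable
  also have "\<dots> = (\<integral>\<^sup>+f. ennreal (exp (l * (((\<Sum>i=1..k. f i) - f j) / real (k - 1) - \<mu>))) * indicator E f \<partial>Q)"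
  proof (rule nn_integral_cong)
    fix f assume "f \<in> space Q"
    then show "?Z (swap_coords N j k f)
      = ennreal (exp (l * (((\<Sum>i=1..k. f i) - f j) / real (k - 1) - \<mu>))) * indicator E f"
      using sym[of j k f] sample_mean_pred_swap_coords[OF j k(2), of f] j k
      by (simp add: indicator_def)
  qed
  finally show ?thesis ..
qed

lemma nn_integral_exp_sample_mean_step:
  assumes k: "2 \<le> k" "k \<le> N" and E: "E \<in> sets Q"
    and sym: "\<And>a b f. a \<in> {1..k} \<Longrightarrow> b \<in> {1..k} \<Longrightarrow> f \<in> space Q \<Longrightarrow>
      swap_coords N a b f \<in> E \<longleftrightarrow> f \<in> E"
    and l: "0 \<le> l"
  shows "(\<integral>\<^sup>+f. ennreal (exp (l * (sample_mean k f - \<mu>))) * indicator E f \<partial>Q)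
       \<le> (\<integral>\<^sup>+f. ennreal (exp (l * (sample_mean (k - 1) f - \<mu>))) * indicator E f \<partial>Q)"
    (is "_ \<le> ?R")
proof -
  define W where "W j f = ennreal (exp (l * (((\<Sum>i=1..k. f i) - f j) / real (k - 1) - \<mu>))) * indicator E f"
    for j f
  have W: "W j \<in> borel_measurable Q" if "j \<in> {1..k}" for j
  proof -
    have [measurable]: "(\<lambda>f. \<Sum>i=1..k. f i) \<in> borel_measurable Q"
      using k(2) by (rule measurable_sum_coords)
    have [measurable]: "(\<lambda>f. f j) \<in> borel_measurable Q"
      using that k by (intro measurable_coord) auto
    note E[measurable]
    show ?thesis unfolding W_def[abs_def] by measurable
  qed
  have "(\<integral>\<^sup>+f. ennreal (exp (l * (sample_mean k f - \<mu>))) * indicator E f \<partial>Q)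
      \<le> (\<integral>\<^sup>+f. (\<Sum>j=1..k. ennreal (1 / real k) * W j f) \<partial>Q)"
  proof (rule nn_integral_mono)
    fix f
    have "ennreal (exp (l * (sample_mean k f - \<mu>)))
        \<le> ennreal ((\<Sum>j=1..k. exp (l * (((\<Sum>i=1..k. f i) - f j) / real (k - 1) - \<mu>))) / real k)"
      using exp_sample_mean_le_leave_one_out[OF k(1) l] by (rule ennreal_leI)
    then show "ennreal (exp (l * (sample_mean k f - \<mu>))) * indicator E f
             \<le> (\<Sum>j=1..k. ennreal (1 / real k) * W j f)"
      by (auto simp: W_def indicator_def sum_divide_distrib ennreal_mult[symmetric])
  qed
  also have "\<dots> = (\<Sum>j=1..k. \<integral>\<^sup>+f. ennreal (1 / real k) * W j f \<partial>Q)"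
    using W by (intro nn_integral_sum) auto
  also have "\<dots> = (\<Sum>j=1..k. ennreal (1 / real k) * (\<integral>\<^sup>+f. W j f \<partial>Q))"
    using W by (intro sum.cong refl nn_integral_cmult) auto
  also have "\<dots> = (\<Sum>j=1..k. ennreal (1 / real k) * ?R)"
    using k nn_integral_leave_one_out[OF _ k(2) _ E sym] by (simp add: W_def)
  also have "\<dots> = ?R"
    using k by (simp add: ennreal_of_nat_eq_real_of_nat ennreal_mult[symmetric] mult.assoc[symmetric])
  finally show ?thesis .
qed

lemma nn_integral_exp_sample_mean_antimono:
  assumes "1 \<le> n" "n \<le> k" "k \<le> N" and E: "E \<in> sets Q"
    and sym: "\<And>a b f. a \<in> {1..k} \<Longrightarrow> b \<in> {1..k} \<Longrightarrow> f \<in> space Q \<Longrightarrow>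
      swap_coords N a b f \<in> E \<longleftrightarrow> f \<in> E"
    and l: "0 \<le> l"
  shows "(\<integral>\<^sup>+f. ennreal (exp (l * (sample_mean k f - \<mu>))) * indicator E f \<partial>Q)
       \<le> (\<integral>\<^sup>+f. ennreal (exp (l * (sample_mean n f - \<mu>))) * indicator E f \<partial>Q)"
  using assms(2,3) sym
proof (induction k rule: dec_induct)
  case (step m)
  have "(\<integral>\<^sup>+f. ennreal (exp (l * (sample_mean (Suc m) f - \<mu>))) * indicator E f \<partial>Q)
      \<le> (\<integral>\<^sup>+f. ennreal (exp (l * (sample_mean m f - \<mu>))) * indicator E f \<partial>Q)"
    using nn_integral_exp_sample_mean_step[OF _ step.prems(1) E step.prems(2) l] step.hyps assms(1)
    by simp
  also have "\<dots> \<le> (\<integral>\<^sup>+f. ennreal (exp (l * (sample_mean n f - \<mu>))) * indicator E f \<partial>Q)"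
    using step.prems by (intro step.IH) auto
  finally show ?case .
qed simp

lemma last_exceedance_swap_coords:
  assumes "a \<in> {1..k}" "b \<in> {1..k}" "k \<le> N" "f \<in> space Q"
  shows "swap_coords N a b f \<in> last_exceedance Q (\<lambda>j g. sample_mean j g - \<mu>) x N k
     \<longleftrightarrow> f \<in> last_exceedance Q (\<lambda>j g. sample_mean j g - \<mu>) x N k"
proof -
  have "swap_coords N a b f \<in> space Q"
    using assms by (intro measurable_space[OF measurable_swap_coords]) auto
  moreover have "sample_mean j (swap_coords N a b f) = sample_mean j f" if "k \<le> j" "j \<le> N" for j
    using assms that by (intro sample_mean_swap_coords) auto
  ultimately show ?thesis
    using assms by (auto simp: last_exceedance_def)
qed

lemma maximal_ineq_exp_sample_mean_PiM:
  assumes n: "1 \<le> n" "n \<le> N" and l: "0 \<le> l"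
  shows "ennreal (exp (l * x)) * emeasure Q {f \<in> space Q. \<exists>k\<in>{n..N}. x < sample_mean k f - \<mu>}
       \<le> (\<integral>\<^sup>+f. ennreal (exp (l * (sample_mean n f - \<mu>))) \<partial>Q)"
proof (rule maximal_ineq_last_exceedance[where S = "\<lambda>k f. sample_mean k f - \<mu>"
      and Z = "\<lambda>k f. ennreal (exp (l * (sample_mean k f - \<mu>)))"])
  fix k assume k: "k \<le> N"
  then have [measurable]: "sample_mean k \<in> borel_measurable Q"
    by (rule measurable_sample_mean)
  show "(\<lambda>f. sample_mean k f - \<mu>) \<in> borel_measurable Q" by measurable
  show "(\<lambda>f. ennreal (exp (l * (sample_mean k f - \<mu>)))) \<in> borel_measurable Q" by measurable
next
  fix k f assume "x < sample_mean k f - \<mu>"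
  then show "ennreal (exp (l * x)) \<le> ennreal (exp (l * (sample_mean k f - \<mu>)))"
    using l by (intro ennreal_leI) (simp add: mult_left_mono)
next
  fix k assume k: "k \<in> {n..N}"
  have "last_exceedance Q (\<lambda>j f. sample_mean j f - \<mu>) x N k \<in> sets Q"
    using measurable_sample_mean k
    by (intro sets_last_exceedance borel_measurable_diff borel_measurable_const) auto
  with k n l show "(\<integral>\<^sup>+f. ennreal (exp (l * (sample_mean k f - \<mu>)))
        * indicator (last_exceedance Q (\<lambda>j f. sample_mean j f - \<mu>) x N k) f \<partial>Q)
      \<le> (\<integral>\<^sup>+f. ennreal (exp (l * (sample_mean n f - \<mu>)))
        * indicator (last_exceedance Q (\<lambda>j f. sample_mean j f - \<mu>) x N k) f \<partial>Q)"
    by (intro nn_integral_exp_sample_mean_antimono last_exceedance_swap_coords) auto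
qed

end

lemma iid_interval_bounded_random_variables_uminus:
  fixes M :: "'a measure"
  assumes "iid_interval_bounded_random_variables M I X Y a b"
  shows "iid_interval_bounded_random_variables M I (\<lambda>i \<omega>. - X i \<omega>) (\<lambda>\<omega>. - Y \<omega>) (- b) (- a)"
proof -
  interpret iid_interval_bounded_random_variables M I X Y a b by (rule assms)
  have distr_uminus: "distr M borel (\<lambda>\<omega>. - Z \<omega>) = distr (distr M borel Z) borel uminus"
    if "random_variable borel Z" for Z :: "'a \<Rightarrow> real"
    using that by (subst distr_distr) (auto simp: comp_def)
  show ?thesis
  proof unfold_locales
    show "indep_vars (\<lambda>_. borel) (\<lambda>i \<omega>. - X i \<omega>) I"
      using indep_vars_compose2[OF indep, of "\<lambda>_ y. - y" "\<lambda>_. borel"] by simp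
    show "distr M borel (\<lambda>\<omega>. - X i \<omega>) = distr M borel (\<lambda>\<omega>. - Y \<omega>)" if "i \<in> I" for i
      using that distr_X[OF that] by (simp add: distr_uminus)
    show "AE \<omega> in M. - Y \<omega> \<in> {- b..- a}"
      using AE_in_interval by eventually_elim auto
  qed (use fin in auto)
qed

context iid_interval_bounded_random_variables
begin

lemma measurable_restrict_PiM: "(\<lambda>\<omega>. \<lambda>i\<in>I. X i \<omega>) \<in> measurable M (PiM I (\<lambda>_. distr M borel Y))"
  using random_variable by (intro measurable_restrict) (simp add: measurable_cong_sets[OF refl sets_distr])

lemma distr_restrict_eq_PiM:
  assumes "I \<noteq> {}"
  shows "distr M (PiM I (\<lambda>_. distr M borel Y)) (\<lambda>\<omega>. \<lambda>i\<in>I. X i \<omega>) = PiM I (\<lambda>_. distr M borel Y)"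
proof -
  have "indep_vars (\<lambda>_. borel) X I \<longleftrightarrow>
    distr M (PiM I (\<lambda>_. borel)) (\<lambda>\<omega>. \<lambda>i\<in>I. X i \<omega>) = PiM I (\<lambda>i. distr M borel (X i))"
    by (rule indep_vars_iff_distr_eq_PiM'[OF assms]) (rule random_variable)
  moreover have "distr M (PiM I (\<lambda>_. distr M borel Y)) (\<lambda>\<omega>. \<lambda>i\<in>I. X i \<omega>)
      = distr M (PiM I (\<lambda>_. borel)) (\<lambda>\<omega>. \<lambda>i\<in>I. X i \<omega>)"
    by (intro distr_cong refl sets_PiM_cong) auto
  moreover have "PiM I (\<lambda>i. distr M borel (X i)) = PiM I (\<lambda>_. distr M borel Y)"
    by (intro PiM_cong refl distr_X)
  ultimately show ?thesis
    using indep by simp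
qed

end

lemma (in prob_space) nn_integral_exp_sample_mean_le:
  assumes "iid_interval_bounded_random_variables M I X Y a b" and "{1..n} \<subseteq> I" "1 \<le> n" "0 < l"
  shows "(\<integral>\<^sup>+\<omega>. ennreal (exp (l * (sample_mean n (\<lambda>i. X i \<omega>) - expectation Y))) \<partial>M)
       \<le> ennreal (exp (l\<^sup>2 * (b - a)\<^sup>2 / (8 * real n)))"
proof -
  interpret iid_interval_bounded_random_variables M I X Y a b by (rule assms(1))
  define \<mu> where "\<mu> = expectation Y"
  have "exp (l * (sample_mean n (\<lambda>i. X i \<omega>) - \<mu>)) = (\<Prod>i\<in>{1..n}. exp (l / n * (X i \<omega> - \<mu>)))"
    for \<omega>
  proof -
    have "(\<Sum>i=1..n. l / n * (X i \<omega> - \<mu>)) = l / n * ((\<Sum>i=1..n. X i \<omega>) - n * \<mu>)"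
      unfolding sum_distrib_left[symmetric] sum_subtractf by simp
    also have "\<dots> = l * (sample_mean n (\<lambda>i. X i \<omega>) - \<mu>)"
      using assms by (simp add: sample_mean_def field_simps)
    finally show ?thesis
      by (metis exp_sum finite_atLeastAtMost)
  qed
  then have "(\<integral>\<^sup>+\<omega>. ennreal (exp (l * (sample_mean n (\<lambda>i. X i \<omega>) - \<mu>))) \<partial>M)
      = (\<integral>\<^sup>+\<omega>. (\<Prod>i\<in>{1..n}. ennreal (exp (l / n * (X i \<omega> - \<mu>)))) \<partial>M)"
    by (simp add: prod_ennreal)
  also have "\<dots> = (\<Prod>i\<in>{1..n}. \<integral>\<^sup>+\<omega>. ennreal (exp (l / n * (X i \<omega> - \<mu>))) \<partial>M)"
    using assms
    by (intro indep_vars_nn_integral indep_vars_compose2[OF indep_vars_subset[OF indep]]) auto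
  also have "\<dots> \<le> (\<Prod>i\<in>{1..n}. ennreal (exp ((l / n)\<^sup>2 * (b - a)\<^sup>2 / 8)))"
  proof (intro prod_mono_ennreal)
    fix i assume "i \<in> {1..n}"
    with assms have i: "i \<in> I" by auto
    interpret interval_bounded_random_variable M "X i" a b
      using i by (rule X.bounded_random_variable)
    show "(\<integral>\<^sup>+\<omega>. ennreal (exp (l / n * (X i \<omega> - \<mu>))) \<partial>M) \<le> ennreal (exp ((l / n)\<^sup>2 * (b - a)\<^sup>2 / 8))"
      using Hoeffdings_lemma_nn_integral[of "l / n"] assms i by (simp add: \<mu>_def)
  qed
  also have "\<dots> = ennreal (exp (real n * ((l / n)\<^sup>2 * (b - a)\<^sup>2 / 8)))"
    by (subst exp_of_nat_mult) (simp add: ennreal_power)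
  also have "real n * ((l / n)\<^sup>2 * (b - a)\<^sup>2 / 8) = l\<^sup>2 * (b - a)\<^sup>2 / (8 * real n)"
    using assms by (simp add: power2_eq_square field_simps)
  finally show ?thesis by (simp add: \<mu>_def)
qed

lemma (in prob_space) maximal_ineq_exp_sample_mean:
  fixes X :: "nat \<Rightarrow> 'a \<Rightarrow> real"
  assumes iid: "iid_interval_bounded_random_variables M {1..N} X Y a b"
    and n: "1 \<le> n" "n \<le> N" and l: "0 \<le> l"
  shows "ennreal (exp (l * x)) * emeasure M {\<omega> \<in> space M. \<exists>k\<in>{n..N}. x < sample_mean k (\<lambda>i. X i \<omega>) - \<mu>}
       \<le> (\<integral>\<^sup>+\<omega>. ennreal (exp (l * (sample_mean n (\<lambda>i. X i \<omega>) - \<mu>))) \<partial>M)"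
proof -
  interpret iid: iid_interval_bounded_random_variables M "{1..N}" X Y a b by (rule iid)
  interpret product_sample "distr M borel Y" N
    by (intro product_sample.intro prob_space_distr iid.rv_Y sets_distr)
  define Xv where "Xv \<omega> = (\<lambda>i\<in>{1..N}. X i \<omega>)" for \<omega>
  have Xv: "Xv \<in> measurable M Q"
    unfolding Xv_def by (rule iid.measurable_restrict_PiM)
  have distr_Xv: "distr M Q Xv = Q"
    unfolding Xv_def using n by (intro iid.distr_restrict_eq_PiM) auto
  have mean_Xv: "sample_mean k (Xv \<omega>) = sample_mean k (\<lambda>i. X i \<omega>)" if "k \<le> N" for k \<omega>
    using that by (auto simp: sample_mean_def Xv_def intro!: sum.cong)
  let ?A = "{f \<in> space Q. \<exists>k\<in>{n..N}. x < sample_mean k f - \<mu>}"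
  have "?A \<in> sets Q"
    by (intro sets_Collect_finite_exceeds borel_measurable_diff measurable_sample_mean) auto
  then have "emeasure (distr M Q Xv) ?A = emeasure M (Xv -` ?A \<inter> space M)"
    by (rule emeasure_distr[OF Xv])
  then have "emeasure Q ?A = emeasure M (Xv -` ?A \<inter> space M)"
    by (simp only: distr_Xv)
  also have "Xv -` ?A \<inter> space M = {\<omega> \<in> space M. \<exists>k\<in>{n..N}. x < sample_mean k (\<lambda>i. X i \<omega>) - \<mu>}"
    using measurable_space[OF Xv] mean_Xv by auto
  finally have "emeasure Q ?A = emeasure M {\<omega> \<in> space M. \<exists>k\<in>{n..N}. x < sample_mean k (\<lambda>i. X i \<omega>) - \<mu>}" .
  moreover have "(\<integral>\<^sup>+f. ennreal (exp (l * (sample_mean n f - \<mu>))) \<partial>distr M Q Xv)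
      = (\<integral>\<^sup>+\<omega>. ennreal (exp (l * (sample_mean n (Xv \<omega>) - \<mu>))) \<partial>M)"
  proof (rule nn_integral_distr[OF Xv])
    have [measurable]: "sample_mean n \<in> borel_measurable (distr M Q Xv)"
      unfolding distr_Xv by (rule measurable_sample_mean[OF n(2)])
    show "(\<lambda>f. ennreal (exp (l * (sample_mean n f - \<mu>)))) \<in> borel_measurable (distr M Q Xv)"
      by measurable
  qed
  then have "(\<integral>\<^sup>+f. ennreal (exp (l * (sample_mean n f - \<mu>))) \<partial>Q)
      = (\<integral>\<^sup>+\<omega>. ennreal (exp (l * (sample_mean n (\<lambda>i. X i \<omega>) - \<mu>))) \<partial>M)"
    by (simp only: distr_Xv mean_Xv[OF n(2)])
  ultimately show ?thesis
    using maximal_ineq_exp_sample_mean_PiM[OF n l, of x \<mu>] by simp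
qed

lemma (in prob_space) maximal_Hoeffding_ineq_gt:
  fixes X :: "nat \<Rightarrow> 'a \<Rightarrow> real"
  assumes iid: "iid_interval_bounded_random_variables M {1..N} X Y a b"
    and n: "1 \<le> n" "n \<le> N" and ab: "a < b" and x: "0 < x"
  shows "prob {\<omega> \<in> space M. \<exists>k\<in>{n..N}. x < sample_mean k (\<lambda>i. X i \<omega>) - expectation Y}
       \<le> exp (- 2 * real n * x\<^sup>2 / (b - a)\<^sup>2)"
    (is "prob ?E \<le> _")
proof -
  define d where "d = (b - a)\<^sup>2"
  define l where "l = 4 * real n * x / d"
  have d: "0 < d" using ab by (simp add: d_def)
  have l: "0 < l" using n x d by (simp add: l_def)
  have "ennreal (exp (l * x) * prob ?E) = ennreal (exp (l * x)) * emeasure M ?E"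
    by (simp add: emeasure_eq_measure ennreal_mult)
  also have "\<dots> \<le> (\<integral>\<^sup>+\<omega>. ennreal (exp (l * (sample_mean n (\<lambda>i. X i \<omega>) - expectation Y))) \<partial>M)"
    using l by (intro maximal_ineq_exp_sample_mean[OF iid n]) simp
  also have "\<dots> \<le> ennreal (exp (l\<^sup>2 * d / (8 * real n)))"
    using n l nn_integral_exp_sample_mean_le[OF iid] by (simp add: d_def)
  finally have "exp (l * x) * prob ?E \<le> exp (l\<^sup>2 * d / (8 * real n))"
    by (subst (asm) ennreal_le_iff) auto
  then have "prob ?E \<le> exp (l\<^sup>2 * d / (8 * real n) - l * x)"
    by (simp add: exp_diff field_simps)
  also have "l\<^sup>2 * d / (8 * real n) - l * x = - 2 * real n * x\<^sup>2 / d"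
    using n d by (simp add: l_def field_simps power2_eq_square)
  finally show ?thesis by (simp add: d_def)
qed

lemma (in prob_space) maximal_Hoeffding_ineq_abs_gt:
  fixes X :: "nat \<Rightarrow> 'a \<Rightarrow> real"
  assumes iid: "iid_interval_bounded_random_variables M {1..N} X Y a b"
    and n: "1 \<le> n" "n \<le> N" and ab: "a < b" and x: "0 < x"
  shows "prob {\<omega> \<in> space M. \<exists>k\<in>{n..N}. x < \<bar>sample_mean k (\<lambda>i. X i \<omega>) - expectation Y\<bar>}
       \<le> 2 * exp (- 2 * real n * x\<^sup>2 / (b - a)\<^sup>2)"
proof -
  interpret iid: iid_interval_bounded_random_variables M "{1..N}" X Y a b by (rule iid)
  define dev where "dev k \<omega> = sample_mean k (\<lambda>i. X i \<omega>) - expectation Y" for k \<omega>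
  define E where "E S = {\<omega> \<in> space M. \<exists>k\<in>{n..N}. x < S k \<omega>}" for S
  have sets_E: "E S \<in> sets M" if "\<And>k. k \<le> N \<Longrightarrow> S k \<in> borel_measurable M" for S
    unfolding E_def using that by (intro sets_Collect_finite_exceeds) auto
  have dev: "dev k \<in> borel_measurable M" if "k \<le> N" for k
    unfolding dev_def using that
    by (intro borel_measurable_diff borel_measurable_sample_mean iid.random_variable) auto
  have "prob (E dev) \<le> exp (- 2 * real n * x\<^sup>2 / (b - a)\<^sup>2)"
    unfolding E_def dev_def by (rule maximal_Hoeffding_ineq_gt[OF iid n ab x])
  moreover have "prob (E (\<lambda>k \<omega>. - dev k \<omega>)) \<le> exp (- 2 * real n * x\<^sup>2 / (b - a)\<^sup>2)"
    using maximal_Hoeffding_ineq_gt[OF iid_interval_bounded_random_variables_uminus[OF iid] n _ x] ab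
    by (simp add: E_def dev_def sample_mean_uminus power2_commute)
  moreover have "x < \<bar>v\<bar> \<longleftrightarrow> x < v \<or> x < - v" for v :: real
    by auto
  then have "{\<omega> \<in> space M. \<exists>k\<in>{n..N}. x < \<bar>dev k \<omega>\<bar>} = E dev \<union> E (\<lambda>k \<omega>. - dev k \<omega>)"
    by (auto simp: E_def)
  moreover have "prob (E dev \<union> E (\<lambda>k \<omega>. - dev k \<omega>)) \<le> prob (E dev) + prob (E (\<lambda>k \<omega>. - dev k \<omega>))"
    using dev by (intro measure_Un_le sets_E borel_measurable_uminus) auto
  ultimately show ?thesis by (simp add: dev_def)
qed

lemma (in prob_space) iid_interval_bounded_random_variables_atLeastAtMost:
  fixes X :: "nat \<Rightarrow> 'a \<Rightarrow> real"
  assumes rv: "\<And>i. i \<ge> 1 \<Longrightarrow> X i \<in> borel_measurable M"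
    and indep: "indep_vars (\<lambda>_. borel) X {1..}"
    and ident: "\<And>i. i \<ge> 1 \<Longrightarrow> distr M borel (X i) = distr M borel (X 1)"
    and bnd: "AE \<omega> in M. A \<le> X 1 \<omega> \<and> X 1 \<omega> \<le> B"
  shows "iid_interval_bounded_random_variables M {1..N} X (X 1) A B"
proof (intro iid_interval_bounded_random_variables.intro iid_interval_bounded_random_variables_axioms.intro)
  show "indep_vars (\<lambda>_. borel) X {1..N}"
    by (rule indep_vars_subset[OF indep]) auto
  show "distr M borel (X i) = distr M borel (X 1)" if "i \<in> {1..N}" for i
    using that by (intro ident) simp
  show "AE \<omega> in M. X 1 \<omega> \<in> {A..B}"
    using bnd by simp
qed (use rv in \<open>simp_all add: prob_space_axioms\<close>)

lemma (in finite_measure) measure_UN_incseq_le: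
  assumes "range A \<subseteq> sets M" "incseq A" "\<And>i. measure M (A i) \<le> c"
  shows "measure M (\<Union>i. A i) \<le> c"
  using LIMSEQ_le_const2[OF finite_Lim_measure_incseq[OF assms(1,2)]] assms(3) by blast

theorem mainTheorem8:
  fixes M :: "'a measure" and X :: "nat \<Rightarrow> 'a \<Rightarrow> real"
    and A B x :: real and n :: nat
  assumes "prob_space M"
    and rv: "\<And>i. i \<ge> 1 \<Longrightarrow> X i \<in> borel_measurable M"
    and indep: "prob_space.indep_vars M (\<lambda>_. borel) X {1..}"
    and ident: "\<And>i. i \<ge> 1 \<Longrightarrow> distr M borel (X i) = distr M borel (X 1)"
    and AB: "A < B"
    and bnd: "AE \<omega> in M. A \<le> X 1 \<omega> \<and> X 1 \<omega> \<le> B"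
    and n: "n \<ge> 1"
    and x: "x > 0"
  shows "measure M {\<omega> \<in> space M.
           (SUP k\<in>{n..}. ereal \<bar>(\<Sum>i=1..k. X i \<omega>) / real k - prob_space.expectation M (X 1)\<bar>) > ereal x}
         \<le> 2 * exp (- 2 * (B - A) powr (-2) * real n * x\<^sup>2)"
proof -
  interpret prob_space M by fact
  have iid: "iid_interval_bounded_random_variables M {1..N} X (X 1) A B" for N
    using rv indep ident bnd by (rule iid_interval_bounded_random_variables_atLeastAtMost)
  define T where
    "T N = {\<omega> \<in> space M. \<exists>k\<in>{n..N}. x < \<bar>sample_mean k (\<lambda>i. X i \<omega>) - expectation (X 1)\<bar>}" for N
  have "measure M (T N) \<le> 2 * exp (- 2 * real n * x\<^sup>2 / (B - A)\<^sup>2)" for N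
  proof (cases "n \<le> N")
    case True
    then show ?thesis
      unfolding T_def by (rule maximal_Hoeffding_ineq_abs_gt[OF iid n _ AB x])
  qed (simp add: T_def)
  moreover have "T N \<in> sets M" for N
    unfolding T_def using rv
    by (intro sets_Collect_finite_exceeds borel_measurable_abs borel_measurable_diff
        borel_measurable_sample_mean borel_measurable_const) auto
  moreover have "incseq T"
    by (rule incseq_SucI) (force simp: T_def)
  ultimately have "measure M (\<Union>N. T N) \<le> 2 * exp (- 2 * real n * x\<^sup>2 / (B - A)\<^sup>2)"
    by (intro measure_UN_incseq_le) auto
  moreover have "{\<omega> \<in> space M. (SUP k\<in>{n..}. ereal \<bar>(\<Sum>i=1..k. X i \<omega>) / real k - expectation (X 1)\<bar>) > ereal x}
      = (\<Union>N. T N)"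
    by (auto simp: less_SUP_iff T_def sample_mean_def) (use atLeastAtMost_iff in blast)
  moreover have "(B - A) powr (-2) = 1 / (B - A)\<^sup>2"
    using AB by (simp add: powr_minus divide_inverse)
  ultimately show ?thesis by simp
qed

end
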